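(* Let $G=(V,E)$ be a graph on $n$ vertices with minimum degree $m$, where $m\to\infty$ as $n\to\infty$. Consider the following depth-first exploration. Vertices are partitioned into sets $S,U,T$, initially $S=U=\emptyset$, $T=V$; $U$ is a stack. Each step: if $U$ is empty, move some vertex of $T$ to the top of $U$ (a restart). Let $u$ be the top vertex of $U$; if $u$ has already made $k$ choices, move $u$ from $U$ to $S$ and continue with the new top of $U$. Otherwise $u$ makes one new choice: a vertex $v$ chosen uniformly at random from the $G$-neighborhood of $u$, independently of everything else; this choice counts as one step. If $v\in T$ (a hit), $v$ is moved from $T$ to the top of $U$. Then for every (sufficiently small) $\varepsilon>0$ and every sufficiently large constant $k$ (depending on $\varepsilon$), with high probability, after $\varepsilon k m$ choices have been made in total, the number of hits is at least $(1-\varepsilon)m$.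
   Context: "With high probability" means with probability tending to $1$ as $n\to\infty$. Each vertex makes at most $k$ choices in total during the exploration. *)

theory Defs
  imports "HOL-Probability.Probability"
begin

text \<open>S = explored vertices, U = stack
 (head = top), T = untouched vertices, nch v = number of choices made so far by v,
 tot = total number of choices made, hits = number of hits so far.\<close>

record dfs_state =
  Sset :: "nat set"
  Ustack :: "nat list"
  Tset :: "nat set"
  nch :: "nat \<Rightarrow> nat"
  tot :: nat
  hits :: nat

definition dfs_init :: "nat \<Rightarrow> dfs_state" where
  "dfs_init n = \<lparr>Sset = {}, Ustack = [], Tset = {..<n}, nch = (\<lambda>_. 0), tot = 0, hits = 0\<rparr>"

definition dfs_step ::
  "(nat \<Rightarrow> nat \<Rightarrow> bool) \<Rightarrow> nat \<Rightarrow> nat \<Rightarrow> (dfs_state \<Rightarrow> nat) \<Rightarrow> dfs_state \<Rightarrow> dfs_state pmf" where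
  "dfs_step E k t r st =
    (if t \<le> tot st then return_pmf st
     else (case Ustack st of
       [] \<Rightarrow> (if Tset st = {} then return_pmf st
              else return_pmf (st\<lparr>Ustack := [r st], Tset := Tset st - {r st}\<rparr>))
     | u # us \<Rightarrow>
         (if k \<le> nch st u then return_pmf (st\<lparr>Ustack := us, Sset := insert u (Sset st)\<rparr>)
          else map_pmf
            (\<lambda>v. let st' = st\<lparr>nch := (nch st)(u := nch st u + 1), tot := tot st + 1\<rparr>
                 in if v \<in> Tset st
                    then st'\<lparr>Ustack := v # u # us, Tset := Tset st - {v}, hits := hits st + 1\<rparr>
                    else st')
            (pmf_of_set {v. E u v}))))"

text \<open>With N = t + 2n + 1 the process has certainly reached the moment
 at which exactly t choices have been made (at most n restarts and n pops occur).\<close>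

definition dfs_run ::
  "(nat \<Rightarrow> nat \<Rightarrow> bool) \<Rightarrow> nat \<Rightarrow> nat \<Rightarrow> nat \<Rightarrow> (dfs_state \<Rightarrow> nat) \<Rightarrow> nat \<Rightarrow> dfs_state pmf" where
  "dfs_run E n k t r N = ((\<lambda>p. bind_pmf p (dfs_step E k t r)) ^^ N) (return_pmf (dfs_init n))"

definition min_degree :: "(nat \<Rightarrow> nat \<Rightarrow> bool) \<Rightarrow> nat \<Rightarrow> nat" where
  "min_degree E n = Min ((\<lambda>v. card {u. E v u}) ` {..<n})"

definition simple_graph_on :: "nat \<Rightarrow> (nat \<Rightarrow> nat \<Rightarrow> bool) \<Rightarrow> bool" where
  "simple_graph_on n E \<longleftrightarrow> (\<forall>u v. E u v \<longrightarrow> u < n \<and> v < n \<and> u \<noteq> v \<and> E v u)"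

end

theory Submission
  imports Defs
begin

text \<open>Write c for the number of choices made, h for the number of hits and \<tau> for the number of
  discovered vertices, so that \<tau> - h is the number of restarts.  Two nonnegative supermartingales
  control the exploration.  As long as h < (1 - e) m and there are fewer than R \<approx> e m / 2
  restarts, fewer than (1 - e/2) m vertices are discovered; the top vertex has at least m
  neighbours, so each choice hits with probability at least e/2 and exp (e c / 4 - h) is a
  supermartingale.  If all t \<approx> e k m choices are made in that regime, this potential ends above
  exp m, which by Markov's inequality has probability at most exp (- m).
  A restart needs every discovered vertex to have made all its k choices, so k \<tau> \<le> c < t, hence
  \<tau> < e m; then each choice hits with probability at least 3/4 and 2 powr (c - 2h) is a
  supermartingale, while R restarts force c - 2h \<ge> (k - 2)(R - 1).  So many restarts are
  exponentially unlikely as well.  Finally, exhausting the graph with fewer than R restarts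
  would take more than n - R > (1 - e) m hits.\<close>

lemma set_pmf_funpow_bind_induct [consumes 1, case_names init step]:
  assumes "x \<in> set_pmf (((\<lambda>p. bind_pmf p s) ^^ j) p0)"
    and init: "\<And>x. x \<in> set_pmf p0 \<Longrightarrow> P 0 x"
    and step: "\<And>j x y. P j x \<Longrightarrow> y \<in> set_pmf (s x) \<Longrightarrow> P (Suc j) y"
  shows "P j x"
  using assms(1)
proof (induction j arbitrary: x)
  case 0
  then show ?case using init by simp
next
  case (Suc j)
  then show ?case using step by auto
qed

lemma nn_integral_funpow_bind_pmf_le:
  assumes "\<And>j x. x \<in> set_pmf (((\<lambda>p. bind_pmf p s) ^^ j) p0) \<Longrightarrow> (\<integral>\<^sup>+y. f y \<partial>s x) \<le> f x"
  shows "(\<integral>\<^sup>+x. f x \<partial>(((\<lambda>p. bind_pmf p s) ^^ j) p0)) \<le> (\<integral>\<^sup>+x. f x \<partial>p0)"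
proof (induction j)
  case 0
  then show ?case by simp
next
  case (Suc j)
  have "(\<integral>\<^sup>+x. f x \<partial>(((\<lambda>p. bind_pmf p s) ^^ Suc j) p0))
      = (\<integral>\<^sup>+x. (\<integral>\<^sup>+y. f y \<partial>s x) \<partial>(((\<lambda>p. bind_pmf p s) ^^ j) p0))"
    by simp
  also have "\<dots> \<le> (\<integral>\<^sup>+x. f x \<partial>(((\<lambda>p. bind_pmf p s) ^^ j) p0))"
    by (rule nn_integral_mono_AE) (auto simp: AE_measure_pmf_iff assms)
  finally show ?case using Suc by simp
qed

lemma measure_pmf_Markov_inequality:
  fixes g :: "'a \<Rightarrow> real" and p :: "'a pmf"
  assumes nonneg: "\<And>x. 0 \<le> g x" and "0 < C" and mean: "(\<integral>\<^sup>+x. ennreal (g x) \<partial>p) \<le> 1"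
  shows "measure_pmf.prob p {x. C \<le> g x} \<le> 1 / C"
proof -
  have "{x. C \<le> g x} = {x \<in> space (measure_pmf p). 1 \<le> ennreal (1 / C) * ennreal (g x)}"
    using \<open>0 < C\<close> nonneg
    by (auto simp: ennreal_mult'[symmetric] ennreal_le_iff field_simps ennreal_1[symmetric]
             simp del: ennreal_1)
  then have "emeasure (measure_pmf p) {x. C \<le> g x} \<le> ennreal (1 / C) * (\<integral>\<^sup>+x. ennreal (g x) \<partial>p)"
    using nn_integral_Markov_inequality[of "\<lambda>x. ennreal (g x)" "space (measure_pmf p)"] by simp
  also have "\<dots> \<le> ennreal (1 / C)"
    using mult_left_mono[OF mean] by simp
  finally show ?thesis
    using \<open>0 < C\<close> by (simp add: measure_pmf.emeasure_eq_measure)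
qed

lemma nn_integral_pmf_of_set_indicator_choice:
  fixes a b :: real
  assumes "finite A" "A \<noteq> {}" "0 \<le> a" "0 \<le> b"
  shows "(\<integral>\<^sup>+v. ennreal (if v \<in> B then a else b) \<partial>pmf_of_set A)
       = ennreal ((real (card (A \<inter> B)) * a + real (card (A - B)) * b) / real (card A))"
proof -
  have "(\<integral>\<^sup>+v. ennreal (if v \<in> B then a else b) \<partial>pmf_of_set A)
      = ennreal (\<Sum>v\<in>A. if v \<in> B then a else b) / ennreal (real (card A))"
    using assms by (simp add: nn_integral_pmf_of_set sum_ennreal ennreal_of_nat_eq_real_of_nat)
  also have "(\<Sum>v\<in>A. if v \<in> B then a else b) = real (card (A \<inter> B)) * a + real (card (A - B)) * b"
    using \<open>finite A\<close> by (simp add: sum.If_cases Int_commute Diff_eq)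
  finally show ?thesis
    using assms by (simp add: divide_ennreal card_gt_0_iff del: ennreal_plus)
qed

lemma sum_fun_upd_Suc:
  fixes f :: "'a \<Rightarrow> nat"
  assumes "finite A" "u \<in> A"
  shows "(\<Sum>v\<in>A. (f(u := f u + 1)) v) = (\<Sum>v\<in>A. f v) + 1"
  using assms by (simp add: sum.remove sum.cong[OF refl, of "A - {u}" "f(u := f u + 1)" f])

lemma weighted_exp_step_le:
  fixes x y e s :: real
  assumes "0 \<le> x" "0 \<le> y" "e \<le> 1" and hit: "e / 2 * (x + y) \<le> x"
  shows "x * exp (s + e / 4 - 1) + y * exp (s + e / 4) \<le> (x + y) * exp s"
proof -
  have "exp (-1) \<le> (1 / 2 :: real)"
    using exp_ge_add_one_self[of 1] by (simp add: exp_minus field_simps)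
  then have "x * exp (-1) \<le> x / 2"
    using mult_left_mono[of "exp (-1)" "1/2" x] assms by simp
  moreover have "(x + y) * (1 - e / 4) = x + y - e / 2 * (x + y) / 2"
    by (simp add: algebra_simps)
  ultimately have "x * exp (-1) + y \<le> (x + y) * (1 - e / 4)"
    using hit by linarith
  also have "\<dots> \<le> (x + y) * exp (- (e / 4))"
    using exp_ge_add_one_self[of "- (e / 4)"] assms by (intro mult_left_mono) auto
  finally have "exp (s + e / 4) * (x * exp (-1) + y) \<le> exp (s + e / 4) * ((x + y) * exp (- (e / 4)))"
    by (intro mult_left_mono) auto
  then show ?thesis
    by (simp add: algebra_simps flip: exp_add)
qed

lemma weighted_powr_step_le:
  fixes x y s :: real
  assumes "0 \<le> y" and hit: "4 * y \<le> x + y"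
  shows "x * 2 powr (s - 1) + y * 2 powr (s + 1) \<le> (x + y) * 2 powr s"
proof -
  have "x * 2 powr (s - 1) + y * 2 powr (s + 1) = 2 powr s * (x / 2 + 2 * y)"
    by (simp add: powr_diff powr_add algebra_simps)
  also have "\<dots> \<le> 2 powr s * (x + y)"
    using assms by (intro mult_left_mono) auto
  finally show ?thesis by (simp add: mult.commute)
qed

lemma set_pmf_dfs_step_cases:
  assumes "st' \<in> set_pmf (dfs_step E k t r st)"
  obtains (stopped) "st' = st" "t \<le> tot st \<or> (Ustack st = [] \<and> Tset st = {})"
  | (restart) "tot st < t" "Ustack st = []" "Tset st \<noteq> {}"
      "st' = st\<lparr>Ustack := [r st], Tset := Tset st - {r st}\<rparr>"
  | (pop) u us where "tot st < t" "Ustack st = u # us" "k \<le> nch st u"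
      "st' = st\<lparr>Ustack := us, Sset := insert u (Sset st)\<rparr>"
  | (hit) u us v where "tot st < t" "Ustack st = u # us" "nch st u < k" "v \<in> Tset st"
      "st' = st\<lparr>nch := (nch st)(u := nch st u + 1), tot := tot st + 1,
                 Ustack := v # u # us, Tset := Tset st - {v}, hits := hits st + 1\<rparr>"
  | (miss) u us where "tot st < t" "Ustack st = u # us" "nch st u < k"
      "st' = st\<lparr>nch := (nch st)(u := nch st u + 1), tot := tot st + 1\<rparr>"
  using assms unfolding dfs_step_def
  by (auto simp: Let_def not_le split: list.splits if_splits)

definition dfs_inv :: "nat \<Rightarrow> nat \<Rightarrow> nat \<Rightarrow> dfs_state \<Rightarrow> bool" where
  "dfs_inv n k t st \<longleftrightarrow> Tset st \<subseteq> {..<n} \<and> set (Ustack st) \<subseteq> {..<n} \<and> Sset st \<subseteq> {..<n}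
     \<and> {..<n} - Tset st \<subseteq> Sset st \<union> set (Ustack st) \<and> (\<forall>v\<in>Sset st. k \<le> nch st v)
     \<and> (\<Sum>v<n. nch st v) = tot st \<and> hits st + card (Tset st) \<le> n
     \<and> length (Ustack st) + card (Tset st) \<le> n \<and> tot st \<le> t"

definition dfs_stopped :: "nat \<Rightarrow> dfs_state \<Rightarrow> bool" where
  "dfs_stopped t st \<longleftrightarrow> t \<le> tot st \<or> (Ustack st = [] \<and> Tset st = {})"

text \<open>Every step that is not stopped increases this measure, which is bounded by t + 2n.\<close>

definition dfs_progress :: "nat \<Rightarrow> dfs_state \<Rightarrow> nat" where
  "dfs_progress n st = tot st + (n - card (Tset st)) + (n - card (Tset st) - length (Ustack st))"

lemma dfs_inv_init: "dfs_inv n k t (dfs_init n)"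
  unfolding dfs_inv_def dfs_init_def by auto

lemma dfs_inv_card_Tset:
  assumes "dfs_inv n k t st"
  shows "finite (Tset st)" "card (Tset st) \<le> n" "card ({..<n} - Tset st) = n - card (Tset st)"
  using assms unfolding dfs_inv_def
  by (auto simp: card_Diff_subset finite_subset card_mono[of "{..<n}", simplified])

lemma dfs_step_inv:
  assumes I: "dfs_inv n k t st" and restart_in_T: "\<And>st. Tset st \<noteq> {} \<Longrightarrow> r st \<in> Tset st"
    and st': "st' \<in> set_pmf (dfs_step E k t r st)"
  shows "dfs_inv n k t st'"
    and "dfs_stopped t st \<Longrightarrow> st' = st"
    and "\<not> dfs_stopped t st \<Longrightarrow> dfs_progress n st < dfs_progress n st'"
proof -
  have finT: "finite (Tset st)"
    using dfs_inv_card_Tset[OF I] by simp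
  have "dfs_inv n k t st' \<and> (dfs_stopped t st \<longrightarrow> st' = st)
           \<and> (\<not> dfs_stopped t st \<longrightarrow> dfs_progress n st < dfs_progress n st')"
    using st'
  proof (cases rule: set_pmf_dfs_step_cases)
    case stopped
    then show ?thesis using I by (simp add: dfs_stopped_def)
  next
    case restart
    have r: "r st \<in> Tset st" using restart restart_in_T by simp
    then have "card (Tset st - {r st}) = card (Tset st) - 1" "1 \<le> card (Tset st)"
      using finT by (auto simp: Suc_le_eq card_gt_0_iff)
    then show ?thesis
      using I restart r unfolding dfs_inv_def dfs_stopped_def dfs_progress_def by auto
  next
    case pop
    then show ?thesis
      using I unfolding dfs_inv_def dfs_stopped_def dfs_progress_def by auto
  next
    case (hit u us v)
    then have "u < n" "card (Tset st - {v}) = card (Tset st) - 1" "1 \<le> card (Tset st)"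
      using I finT unfolding dfs_inv_def by (auto simp: Suc_le_eq card_gt_0_iff)
    moreover have "(\<Sum>w<n. ((nch st)(u := nch st u + 1)) w) = (\<Sum>w<n. nch st w) + 1"
      using \<open>u < n\<close> by (intro sum_fun_upd_Suc) auto
    ultimately show ?thesis
      using I hit unfolding dfs_inv_def dfs_stopped_def dfs_progress_def by auto
  next
    case (miss u us)
    then have "u < n"
      using I unfolding dfs_inv_def by auto
    then have "(\<Sum>w<n. ((nch st)(u := nch st u + 1)) w) = (\<Sum>w<n. nch st w) + 1"
      by (intro sum_fun_upd_Suc) auto
    then show ?thesis
      using I miss unfolding dfs_inv_def dfs_stopped_def dfs_progress_def by auto
  qed
  then show "dfs_inv n k t st'" "dfs_stopped t st \<Longrightarrow> st' = st"
    "\<not> dfs_stopped t st \<Longrightarrow> dfs_progress n st < dfs_progress n st'"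
    by auto
qed

lemma dfs_run_inv:
  assumes restart_in_T: "\<And>st. Tset st \<noteq> {} \<Longrightarrow> r st \<in> Tset st"
    and "st \<in> set_pmf (dfs_run E n k t r N)"
  shows "dfs_inv n k t st \<and> (N \<le> dfs_progress n st \<or> dfs_stopped t st)"
  using assms(2) unfolding dfs_run_def
proof (induction rule: set_pmf_funpow_bind_induct)
  case (init st)
  then show ?case using dfs_inv_init by simp
next
  case (step j st st')
  then have "dfs_inv n k t st" by simp
  from dfs_step_inv[OF this restart_in_T step(2)] step(1) show ?case
    by (cases "dfs_stopped t st") auto
qed

lemma dfs_run_stopped:
  assumes restart_in_T: "\<And>st. Tset st \<noteq> {} \<Longrightarrow> r st \<in> Tset st"
    and "st \<in> set_pmf (dfs_run E n k t r (t + 2 * n + 1))"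
  shows "dfs_inv n k t st" "dfs_stopped t st"
proof -
  show I: "dfs_inv n k t st"
    using dfs_run_inv[OF assms] by simp
  then have "dfs_progress n st \<le> t + 2 * n"
    unfolding dfs_inv_def dfs_progress_def by auto
  then show "dfs_stopped t st"
    using dfs_run_inv[OF assms] by auto
qed

lemma dfs_inv_restart_choices:
  assumes I: "dfs_inv n k t st" and "Ustack st = []"
  shows "k * (n - card (Tset st)) \<le> tot st"
proof -
  have finS: "finite (Sset st)"
    using I finite_subset unfolding dfs_inv_def by blast
  have "n - card (Tset st) = card ({..<n} - Tset st)"
    using dfs_inv_card_Tset[OF I] by simp
  also have "\<dots> \<le> card (Sset st)"
    using I assms(2) finS unfolding dfs_inv_def by (intro card_mono) auto
  finally have "k * (n - card (Tset st)) \<le> (\<Sum>v\<in>Sset st. k)"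
    by simp
  also have "\<dots> \<le> (\<Sum>v\<in>Sset st. nch st v)"
    using I unfolding dfs_inv_def by (intro sum_mono) auto
  also have "\<dots> \<le> (\<Sum>v<n. nch st v)"
    using I unfolding dfs_inv_def by (intro sum_mono2) auto
  also have "\<dots> = tot st"
    using I unfolding dfs_inv_def by simp
  finally show ?thesis .
qed

locale dfs_graph =
  fixes n :: nat and E :: "nat \<Rightarrow> nat \<Rightarrow> bool" and k t :: nat and r :: "dfs_state \<Rightarrow> nat"
    and m :: nat
  assumes simple: "simple_graph_on n E"
    and degree_ge: "\<And>u. u < n \<Longrightarrow> m \<le> card {v. E u v}"
    and m_pos: "0 < m"
    and restart_in_T: "\<And>st. Tset st \<noteq> {} \<Longrightarrow> r st \<in> Tset st"
begin

lemma neighbours_subset: "{v. E u v} \<subseteq> {..<n} - {u}"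
  using simple unfolding simple_graph_on_def by auto

lemma finite_neighbours: "finite {v. E u v}"
  using neighbours_subset finite_subset by blast

lemma neighbours_nonempty:
  assumes "u < n"
  shows "{v. E u v} \<noteq> {}"
  using degree_ge[OF assms] m_pos by (intro notI) simp

lemma min_degree_less: "0 < n \<Longrightarrow> m < n"
  using degree_ge[of 0] card_mono[OF _ neighbours_subset[of 0]] by force

text \<open>A potential F of (tot, hits, card T) is a supermartingale once it does not increase at a
  restart and, for a choice by a top vertex with x neighbours in T and y outside T, its average
  over the two outcomes does not increase.\<close>

lemma dfs_step_potential_le:
  fixes F :: "nat \<Rightarrow> nat \<Rightarrow> nat \<Rightarrow> real"
  assumes I: "dfs_inv n k t st" and nonneg: "\<And>c h ct. 0 \<le> F c h ct"
    and restart: "\<And>c h ct. c < t \<Longrightarrow> k * (n - ct) \<le> c \<Longrightarrow> 1 \<le> ct \<Longrightarrow> h + ct \<le> n \<Longrightarrow>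
        F c h (ct - 1) \<le> F c h ct"
    and choice: "\<And>x y c h ct. m \<le> x + y \<Longrightarrow> y \<le> n - ct \<Longrightarrow> h + ct \<le> n \<Longrightarrow> (0 < x \<Longrightarrow> 1 \<le> ct) \<Longrightarrow>
        real x * F (c + 1) (h + 1) (ct - 1) + real y * F (c + 1) h ct \<le> real (x + y) * F c h ct"
  shows "(\<integral>\<^sup>+x. F (tot x) (hits x) (card (Tset x)) \<partial>dfs_step E k t r st)
         \<le> F (tot st) (hits st) (card (Tset st))"
proof -
  let ?c = "tot st" and ?h = "hits st" and ?ct = "card (Tset st)"
  have finT: "finite (Tset st)" and hT: "?h + ?ct \<le> n"
    using I dfs_inv_card_Tset[OF I] unfolding dfs_inv_def by auto
  consider "t \<le> ?c" | "?c < t" "Ustack st = []" "Tset st = {}"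
    | "?c < t" "Ustack st = []" "Tset st \<noteq> {}"
    | u us where "?c < t" "Ustack st = u # us" "k \<le> nch st u"
    | u us where "?c < t" "Ustack st = u # us" "nch st u < k"
    by (metis linorder_not_le list.exhaust)
  then show ?thesis
  proof cases
    case 3
    then have "r st \<in> Tset st" using restart_in_T by simp
    then have "card (Tset st - {r st}) = ?ct - 1" "1 \<le> ?ct"
      using finT by (auto simp: Suc_le_eq card_gt_0_iff)
    then show ?thesis
      using 3 restart dfs_inv_restart_choices[OF I] hT by (simp add: dfs_step_def ennreal_leI)
  next
    case (5 u us)
    define A where "A = {v. E u v}"
    have "u < n" using I 5 unfolding dfs_inv_def by auto
    then have A: "finite A" "A \<noteq> {}" "m \<le> card A"
      using finite_neighbours neighbours_nonempty degree_ge by (auto simp: A_def)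
    have "A - Tset st \<subseteq> {..<n} - Tset st"
      using neighbours_subset by (auto simp: A_def)
    then have miss: "card (A - Tset st) \<le> n - ?ct"
      using card_mono[of "{..<n} - Tset st"] dfs_inv_card_Tset[OF I] by auto
    have hit: "0 < card (A \<inter> Tset st) \<Longrightarrow> 1 \<le> ?ct"
      using finT by (auto simp: Suc_le_eq card_gt_0_iff)
    have split: "card (A \<inter> Tset st) + card (A - Tset st) = card A"
      using A by (metis card_Int_Diff)
    have "(\<integral>\<^sup>+x. F (tot x) (hits x) (card (Tset x)) \<partial>dfs_step E k t r st)
        = (\<integral>\<^sup>+v. ennreal (if v \<in> Tset st then F (?c + 1) (?h + 1) (?ct - 1) else F (?c + 1) ?h ?ct)
            \<partial>pmf_of_set A)"
      using 5 finT by (auto simp: dfs_step_def Let_def A_def intro!: nn_integral_cong)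
    also have "\<dots> = ennreal ((real (card (A \<inter> Tset st)) * F (?c + 1) (?h + 1) (?ct - 1)
        + real (card (A - Tset st)) * F (?c + 1) ?h ?ct) / real (card A))"
      using A nonneg by (intro nn_integral_pmf_of_set_indicator_choice) auto
    also have "\<dots> \<le> F ?c ?h ?ct"
      using choice[of "card (A \<inter> Tset st)" "card (A - Tset st)" ?ct ?h ?c, OF _ miss hT hit] A
      unfolding split by (intro ennreal_leI) (simp add: divide_le_eq card_gt_0_iff mult.commute)
    finally show ?thesis .
  qed (simp_all add: dfs_step_def)
qed

lemma dfs_run_potential_le:
  fixes F :: "nat \<Rightarrow> nat \<Rightarrow> nat \<Rightarrow> real"
  assumes "\<And>st. dfs_inv n k t st \<Longrightarrow>
      (\<integral>\<^sup>+x. F (tot x) (hits x) (card (Tset x)) \<partial>dfs_step E k t r st) \<le> F (tot st) (hits st) (card (Tset st))"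
  shows "(\<integral>\<^sup>+x. F (tot x) (hits x) (card (Tset x)) \<partial>dfs_run E n k t r N) \<le> F 0 0 n"
  using nn_integral_funpow_bind_pmf_le[of "dfs_step E k t r" "return_pmf (dfs_init n)"
      "\<lambda>x. ennreal (F (tot x) (hits x) (card (Tset x)))" N]
    assms dfs_run_inv[OF restart_in_T, of _ E n k t] unfolding dfs_run_def
  by (auto simp: dfs_init_def)

end

text \<open>The potentials take c = tot, h = hits and ct = card T; thus n - ct vertices have been
  discovered and n - ct - h restarts have occurred.\<close>

locale dfs_potentials = dfs_graph +
  fixes e :: real and R :: nat
  assumes e_pos: "0 < e" and e_le: "e \<le> 1/8"
    and t_eq: "t = nat \<lceil>e * real k * real m\<rceil>"
    and k_ge: "3 \<le> k" and ek_ge: "8 \<le> e * e * real k" and m_ge: "8 \<le> m"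
    and R_pos: "1 \<le> R" and R_le: "real R \<le> e * real m / 2"
begin

definition hit_potential :: "nat \<Rightarrow> nat \<Rightarrow> nat \<Rightarrow> real" where
  "hit_potential c h ct =
    (if (1 - e) * real m \<le> real h \<or> R \<le> n - ct - h then 0 else exp (e / 4 * real c - real h))"

definition restart_penalty :: real where
  "restart_penalty = 2 powr (real (k - 2) * real (R - 1))"

definition restart_potential :: "nat \<Rightarrow> nat \<Rightarrow> nat \<Rightarrow> real" where
  "restart_potential c h ct =
    (if R \<le> n - ct - h then restart_penalty
     else if 4 * (n - ct) \<le> m then 2 powr (real c - 2 * real h) else 0)"

lemma hit_potential_nonneg: "0 \<le> hit_potential c h ct"
  by (simp add: hit_potential_def)

lemma restart_penalty_ge_1: "1 \<le> restart_penalty"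
  unfolding restart_penalty_def by (intro ge_one_powr_ge_zero) auto

lemma restart_potential_nonneg: "0 \<le> restart_potential c h ct"
  using restart_penalty_ge_1 by (simp add: restart_potential_def)

lemma hit_potential_choice_le:
  assumes deg: "m \<le> x + y" and miss: "y \<le> n - ct" and "h + ct \<le> n" and hit: "0 < x \<Longrightarrow> 1 \<le> ct"
  shows "real x * hit_potential (c + 1) (h + 1) (ct - 1) + real y * hit_potential (c + 1) h ct
         \<le> real (x + y) * hit_potential c h ct"
proof (cases "(1 - e) * real m \<le> real h \<or> R \<le> n - ct - h")
  case True
  have "x = 0 \<or> hit_potential (c + 1) (h + 1) (ct - 1) = 0"
  proof (cases "x = 0")
    case False
    then have "n - (ct - 1) - (h + 1) = n - ct - h"
      using hit \<open>h + ct \<le> n\<close> by auto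
    then show ?thesis
      using True by (auto simp: hit_potential_def)
  qed simp
  moreover have "hit_potential (c + 1) h ct = 0" "hit_potential c h ct = 0"
    using True by (auto simp: hit_potential_def)
  ultimately show ?thesis
    by auto
next
  case False
  define s where "s = e / 4 * real c - real h"
  have "n - ct < R + h"
    using False by auto
  then have "real (n - ct) < real R + real h"
    by linarith
  then have "real (n - ct) < (1 - e / 2) * real m"
    using False R_le by (simp add: algebra_simps)
  moreover have "(1 - e / 2) * real m \<le> (1 - e / 2) * real (x + y)"
    using deg e_le by (intro mult_left_mono) auto
  ultimately have "real y < (1 - e / 2) * real (x + y)"
    using miss by linarith
  then have "e / 2 * (real x + real y) \<le> real x"
    by (simp add: algebra_simps)
  then have step: "real x * exp (s + e / 4 - 1) + real y * exp (s + e / 4) \<le> (real x + real y) * exp s"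
    using e_le by (intro weighted_exp_step_le) auto
  have "hit_potential (c + 1) (h + 1) (ct - 1) \<le> exp (s + e / 4 - 1)"
    by (simp add: hit_potential_def s_def algebra_simps)
  then have "real x * hit_potential (c + 1) (h + 1) (ct - 1) + real y * hit_potential (c + 1) h ct
      \<le> real x * exp (s + e / 4 - 1) + real y * exp (s + e / 4)"
    using False by (intro add_mono mult_left_mono) (auto simp: hit_potential_def s_def algebra_simps)
  also have "\<dots> \<le> real (x + y) * hit_potential c h ct"
    using step False by (simp add: hit_potential_def s_def)
  finally show ?thesis .
qed

lemma hit_potential_step_le:
  assumes "dfs_inv n k t st"
  shows "(\<integral>\<^sup>+x. hit_potential (tot x) (hits x) (card (Tset x)) \<partial>dfs_step E k t r st)
         \<le> hit_potential (tot st) (hits st) (card (Tset st))"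
proof (rule dfs_step_potential_le[where F = hit_potential, OF assms hit_potential_nonneg _ hit_potential_choice_le])
  fix c h ct :: nat
  assume "1 \<le> ct" "h + ct \<le> n"
  then show "hit_potential c h (ct - 1) \<le> hit_potential c h ct"
    by (auto simp: hit_potential_def)
qed

lemma restart_potential_restart_le:
  assumes "c < t" "k * (n - ct) \<le> c" "1 \<le> ct" "h + ct \<le> n"
  shows "restart_potential c h (ct - 1) \<le> restart_potential c h ct"
proof -
  have choices: "real k * real (n - ct) \<le> real c"
    using assms(2) by (metis of_nat_le_iff of_nat_mult)
  also have "real c < e * real k * real m"
    using assms(1) t_eq by linarith
  finally have "real (n - ct) < e * real m"
    using k_ge by (simp add: algebra_simps)
  moreover have "e * real m \<le> real m / 8"
    using e_le by (simp add: mult_right_mono[of e "1/8" "real m", simplified])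
  ultimately have few: "4 * (n - ct) \<le> m" "4 * (n - (ct - 1)) \<le> m"
    using assms(3,4) m_ge by linarith+
  have restarts: "n - (ct - 1) - h = (n - ct - h) + 1"
    using assms(3,4) by simp
  have "real (k - 2) * real (R - 1) \<le> real c - 2 * real h" if "n - ct - h = R - 1"
  proof -
    have "real (k - 2) * real (R - 1) \<le> real (k - 2) * real (n - ct)"
      using that by (intro mult_left_mono) auto
    also have "\<dots> = real k * real (n - ct) - 2 * real (n - ct)"
      using k_ge by (simp add: of_nat_diff left_diff_distrib)
    also have "\<dots> \<le> real c - 2 * real h"
      using choices assms(4) by simp
    finally show ?thesis .
  qed
  then show ?thesis
    using few unfolding restart_potential_def restart_penalty_def restarts by auto
qed

lemma restart_potential_choice_le:
  assumes deg: "m \<le> x + y" and miss: "y \<le> n - ct" and "h + ct \<le> n" and hit: "0 < x \<Longrightarrow> 1 \<le> ct"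
  shows "real x * restart_potential (c + 1) (h + 1) (ct - 1) + real y * restart_potential (c + 1) h ct
         \<le> real (x + y) * restart_potential c h ct"
proof -
  let ?hit = "restart_potential (c + 1) (h + 1) (ct - 1)"
  have restarts: "n - (ct - 1) - (h + 1) = n - ct - h" and discovered: "n - (ct - 1) = n - ct + 1"
    if "0 < x"
    using hit[OF that] \<open>h + ct \<le> n\<close> by auto
  consider "R \<le> n - ct - h" | "\<not> R \<le> n - ct - h" "\<not> 4 * (n - ct) \<le> m"
    | "\<not> R \<le> n - ct - h" "4 * (n - ct) \<le> m"
    by blast
  then show ?thesis
  proof cases
    case 1
    then have "real x * ?hit = real x * restart_penalty"
      using restarts by (cases "x = 0") (auto simp: restart_potential_def)
    moreover have "restart_potential (c + 1) h ct = restart_penalty" "restart_potential c h ct = restart_penalty"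
      using 1 by (simp_all add: restart_potential_def)
    ultimately show ?thesis
      by (simp only:) (simp add: algebra_simps)
  next
    case 2
    then have "real x * ?hit = 0"
      using restarts discovered by (cases "x = 0") (auto simp: restart_potential_def)
    moreover have "restart_potential (c + 1) h ct = 0" "restart_potential c h ct = 0"
      using 2 by (simp_all add: restart_potential_def)
    ultimately show ?thesis
      by (simp only:)
  next
    case 3
    define s where "s = real c - 2 * real h"
    have "real x * ?hit \<le> real x * 2 powr (s - 1)"
      using 3 restarts
      by (cases "x = 0") (auto simp: restart_potential_def s_def algebra_simps intro!: mult_left_mono)
    moreover have "restart_potential (c + 1) h ct = 2 powr (s + 1)" "restart_potential c h ct = 2 powr s"
      using 3 by (simp_all add: restart_potential_def s_def algebra_simps)
    moreover have "real x * 2 powr (s - 1) + real y * 2 powr (s + 1) \<le> (real x + real y) * 2 powr s"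
      using 3 miss deg by (intro weighted_powr_step_le) auto
    ultimately show ?thesis
      by simp
  qed
qed

lemma restart_potential_step_le:
  assumes "dfs_inv n k t st"
  shows "(\<integral>\<^sup>+x. restart_potential (tot x) (hits x) (card (Tset x)) \<partial>dfs_step E k t r st)
         \<le> restart_potential (tot st) (hits st) (card (Tset st))"
  by (rule dfs_step_potential_le[where F = restart_potential, OF assms restart_potential_nonneg
        restart_potential_restart_le restart_potential_choice_le])

lemma few_hits_imp_large_potential:
  assumes "0 < n" and st: "st \<in> set_pmf (dfs_run E n k t r (t + 2 * n + 1))"
    and few: "real (hits st) < (1 - e) * real m"
  shows "exp (real m) \<le> hit_potential (tot st) (hits st) (card (Tset st))
         \<or> restart_penalty \<le> restart_potential (tot st) (hits st) (card (Tset st))"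
proof (cases "R \<le> n - card (Tset st) - hits st")
  case True
  then show ?thesis by (simp add: restart_potential_def)
next
  case False
  have I: "dfs_inv n k t st" and stopped: "dfs_stopped t st"
    using dfs_run_stopped[OF restart_in_T st] by auto
  have em: "0 < e * real m" "(1 - e) * real m = real m - e * real m"
    using e_pos m_pos by (simp_all add: algebra_simps)
  have "Tset st \<noteq> {}"
  proof
    assume "Tset st = {}"
    then have "real n < real R + real (hits st)"
      using False by simp
    moreover have "real m < real n"
      using min_degree_less[OF \<open>0 < n\<close>] by simp
    ultimately show False
      using few R_le em by linarith
  qed
  then have "tot st = t"
    using stopped I by (auto simp: dfs_stopped_def dfs_inv_def)
  then have "e / 4 * (e * real k * real m) \<le> e / 4 * real (tot st)"
    using t_eq e_pos by (intro mult_left_mono) auto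
  moreover have "2 * real m \<le> e / 4 * (e * real k * real m)"
    using mult_right_mono[OF ek_ge, of "real m"] by (simp add: algebra_simps)
  ultimately have "real m \<le> e / 4 * real (tot st) - real (hits st)"
    using few em by linarith
  then have "exp (real m) \<le> exp (e / 4 * real (tot st) - real (hits st))"
    by simp
  then show ?thesis
    using few False by (simp add: hit_potential_def)
qed

lemma few_hits_prob_le:
  assumes "0 < n"
  shows "measure_pmf.prob (dfs_run E n k t r (t + 2 * n + 1)) {st. real (hits st) < (1 - e) * real m}
         \<le> 1 / restart_penalty + 1 / exp (real m)"
proof -
  let ?p = "dfs_run E n k t r (t + 2 * n + 1)"
  let ?hit = "\<lambda>x. hit_potential (tot x) (hits x) (card (Tset x))"
  let ?restart = "\<lambda>x. restart_potential (tot x) (hits x) (card (Tset x))"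
  have "0 < (1 - e) * real m"
    using e_le m_pos by (intro mult_pos_pos) auto
  then have "hit_potential 0 0 n = 1"
    using R_pos by (simp add: hit_potential_def)
  then have hit: "measure_pmf.prob ?p {x. exp (real m) \<le> ?hit x} \<le> 1 / exp (real m)"
    using dfs_run_potential_le[OF hit_potential_step_le]
    by (intro measure_pmf_Markov_inequality hit_potential_nonneg) auto
  have "restart_potential 0 0 n = 1"
    using R_pos by (simp add: restart_potential_def)
  then have restart: "measure_pmf.prob ?p {x. restart_penalty \<le> ?restart x} \<le> 1 / restart_penalty"
    using dfs_run_potential_le[OF restart_potential_step_le] restart_penalty_ge_1
    by (intro measure_pmf_Markov_inequality restart_potential_nonneg) auto
  have "measure_pmf.prob ?p {st. real (hits st) < (1 - e) * real m}
      = measure_pmf.prob ?p ({st. real (hits st) < (1 - e) * real m} \<inter> set_pmf ?p)"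
    by (simp add: measure_Int_set_pmf)
  also have "\<dots> \<le> measure_pmf.prob ?p ({x. exp (real m) \<le> ?hit x} \<union> {x. restart_penalty \<le> ?restart x})"
    using few_hits_imp_large_potential[OF \<open>0 < n\<close>] by (intro measure_pmf.finite_measure_mono) auto
  also have "\<dots> \<le> measure_pmf.prob ?p {x. exp (real m) \<le> ?hit x}
      + measure_pmf.prob ?p {x. restart_penalty \<le> ?restart x}"
    by (rule measure_Un_le) auto
  also have "\<dots> \<le> 1 / restart_penalty + 1 / exp (real m)"
    using hit restart by simp
  finally show ?thesis .
qed

end

lemma dfs_few_hits_prob_le:
  fixes E :: "nat \<Rightarrow> nat \<Rightarrow> bool" and r :: "dfs_state \<Rightarrow> nat" and n k m :: nat and e :: real
  defines "t \<equiv> nat \<lceil>e * real k * real m\<rceil>"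
  assumes "simple_graph_on n E" "0 < n" "\<And>u. u < n \<Longrightarrow> m \<le> card {v. E u v}"
    and "\<And>st. Tset st \<noteq> {} \<Longrightarrow> r st \<in> Tset st"
    and e: "0 < e" "e \<le> 1/8" and k: "3 \<le> k" "8 \<le> e * e * real k" and em: "4 \<le> e * real m"
  shows "measure_pmf.prob (dfs_run E n k t r (t + 2 * n + 1)) {st. real (hits st) < (1 - e) * real m}
         \<le> 4 * 2 powr (- (e / 2 * real m)) + exp (- real m)"
proof -
  define R where "R = nat \<lfloor>e * real m / 2\<rfloor>"
  have R: "1 \<le> R" "real R \<le> e * real m / 2" "e * real m / 2 - 1 < real R"
    using em by (auto simp: R_def) linarith+
  have "4 / e \<le> real m"
    using em e by (simp add: field_simps)
  moreover have "32 \<le> 4 / e"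
    using e by (simp add: field_simps)
  ultimately have "8 \<le> m"
    by linarith
  then interpret dfs_potentials n E k t r m e R
    using assms R by unfold_locales (auto simp: t_def)
  have "2 powr (e * real m / 2 - 2) \<le> 2 powr (real (R - 1))"
    using R by (intro powr_mono) auto
  also have "\<dots> \<le> restart_penalty"
    unfolding restart_penalty_def using k mult_right_mono[of 1 "real (k - 2)" "real (R - 1)"]
    by (intro powr_mono) auto
  finally have penalty: "2 powr (e * real m / 2 - 2) \<le> restart_penalty" .
  have "1 / restart_penalty \<le> 1 / 2 powr (e * real m / 2 - 2)"
    using frac_le[OF zero_le_one order_refl _ penalty] by simp
  also have "\<dots> = 4 * 2 powr (- (e / 2 * real m))"
    by (simp add: powr_diff powr_minus_divide)
  finally have "1 / restart_penalty \<le> 4 * 2 powr (- (e / 2 * real m))" .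
  moreover have "1 / exp (real m) = exp (- real m)"
    by (simp add: exp_minus inverse_eq_divide)
  ultimately show ?thesis
    using few_hits_prob_le[OF \<open>0 < n\<close>] by linarith
qed

lemma dfs_many_hits_prob_ge:
  fixes E :: "nat \<Rightarrow> nat \<Rightarrow> bool" and r :: "dfs_state \<Rightarrow> nat" and n k :: nat and e :: real
  assumes "simple_graph_on n E" "0 < n" "\<And>st. Tset st \<noteq> {} \<Longrightarrow> r st \<in> Tset st"
    and e: "0 < e" "e \<le> 1/8" and k: "3 \<le> k" "8 \<le> e * e * real k"
    and em: "4 \<le> e * real (min_degree E n)"
  shows "1 - (4 * 2 powr (- (e / 2 * real (min_degree E n))) + exp (- real (min_degree E n)))
         \<le> (let m = min_degree E n; t = nat \<lceil>e * real k * real m\<rceil>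
            in measure_pmf.prob (dfs_run E n k t r (t + 2 * n + 1)) {st. (1 - e) * real m \<le> real (hits st)})"
proof -
  define m where "m = min_degree E n"
  define t where "t = nat \<lceil>e * real k * real m\<rceil>"
  define p where "p = dfs_run E n k t r (t + 2 * n + 1)"
  have "\<And>u. u < n \<Longrightarrow> m \<le> card {v. E u v}"
    unfolding m_def min_degree_def by (intro Min_le) auto
  then have "measure_pmf.prob p {st. real (hits st) < (1 - e) * real m}
      \<le> 4 * 2 powr (- (e / 2 * real m)) + exp (- real m)"
    using dfs_few_hits_prob_le[OF assms(1,2) _ assms(3) e k] em by (simp add: p_def t_def m_def)
  moreover have "{st. (1 - e) * real m \<le> real (hits st)}
      = space (measure_pmf p) - {st. real (hits st) < (1 - e) * real m}"
    by auto
  then have "measure_pmf.prob p {st. (1 - e) * real m \<le> real (hits st)}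
      = 1 - measure_pmf.prob p {st. real (hits st) < (1 - e) * real m}"
    by (simp only:) (rule measure_pmf.prob_compl, simp)
  ultimately show ?thesis
    by (simp only: Let_def flip: m_def t_def p_def)
qed

lemma tendsto_exp_neg_mult_0:
  fixes f :: "'a \<Rightarrow> real"
  assumes "0 < c" "filterlim f at_top F"
  shows "((\<lambda>x. exp (- (c * f x))) \<longlongrightarrow> 0) F"
proof -
  have "filterlim (\<lambda>x. c * f x) at_top F"
    using assms by (intro filterlim_tendsto_pos_mult_at_top[OF tendsto_const]) auto
  then have "filterlim (\<lambda>x. - (c * f x)) at_bot F"
    by (simp add: filterlim_uminus_at_top)
  then show ?thesis
    by (rule filterlim_compose[OF exp_at_bot])
qed

lemma tendsto_dfs_many_hits_prob:
  fixes e :: real and k :: nat and G :: "nat \<Rightarrow> nat \<Rightarrow> nat \<Rightarrow> bool" and r :: "nat \<Rightarrow> dfs_state \<Rightarrow> nat"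
  assumes e: "0 < e" "e \<le> 1/8" and k: "3 \<le> k" "8 \<le> e * e * real k"
    and simple: "\<And>n. simple_graph_on n (G n)"
    and degree: "filterlim (\<lambda>n. min_degree (G n) n) at_top sequentially"
    and restart_in_T: "\<And>n st. Tset st \<noteq> {} \<Longrightarrow> r n st \<in> Tset st"
  shows "(\<lambda>n. let m = min_degree (G n) n;
                 t = nat \<lceil>e * real k * real m\<rceil>
             in measure_pmf.prob (dfs_run (G n) n k t (r n) (t + 2 * n + 1))
                  {st. (1 - e) * real m \<le> real (hits st)})
         \<longlonglongrightarrow> 1"
proof -
  define M where "M n = real (min_degree (G n) n)" for n
  define fail where "fail x = 4 * 2 powr (- (e / 2 * x)) + exp (- x)" for x :: real
  have M: "filterlim M at_top sequentially"
    unfolding M_def by (rule filterlim_compose[OF filterlim_real_sequentially degree])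
  have "(\<lambda>n. 4 * exp (- ((e / 2 * ln 2) * M n)) + exp (- (1 * M n))) \<longlonglongrightarrow> 4 * 0 + 0"
    using e M by (intro tendsto_intros tendsto_exp_neg_mult_0) auto
  then have fail: "(\<lambda>n. 1 - fail (M n)) \<longlonglongrightarrow> 1"
    using tendsto_diff[OF tendsto_const, of _ 0 sequentially 1]
    by (simp add: fail_def powr_def algebra_simps)
  have "eventually (\<lambda>n. 4 / e \<le> M n \<and> 0 < n) sequentially"
    using M by (auto simp: filterlim_at_top intro: eventually_conj eventually_gt_at_top)
  then have "eventually (\<lambda>n. 1 - fail (M n) \<le> (let m = min_degree (G n) n;
                 t = nat \<lceil>e * real k * real m\<rceil>
             in measure_pmf.prob (dfs_run (G n) n k t (r n) (t + 2 * n + 1))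
                  {st. (1 - e) * real m \<le> real (hits st)})) sequentially"
  proof eventually_elim
    case (elim n)
    then have "4 \<le> e * M n"
      using e by (simp add: field_simps)
    then show ?case
      using dfs_many_hits_prob_ge[OF simple _ restart_in_T e k] elim by (simp add: M_def fail_def)
  qed
  moreover have "eventually (\<lambda>n. (let m = min_degree (G n) n;
                 t = nat \<lceil>e * real k * real m\<rceil>
             in measure_pmf.prob (dfs_run (G n) n k t (r n) (t + 2 * n + 1))
                  {st. (1 - e) * real m \<le> real (hits st)}) \<le> 1) sequentially"
    by (simp add: Let_def)
  ultimately show ?thesis
    using fail by (rule tendsto_sandwich) simp
qed

theorem lemma10:
  "\<exists>\<epsilon>0>0. \<forall>\<epsilon>::real. 0 < \<epsilon> \<and> \<epsilon> < \<epsilon>0 \<longrightarrow>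
     (\<exists>K::nat. \<forall>k\<ge>K.
        \<forall>(G :: nat \<Rightarrow> nat \<Rightarrow> nat \<Rightarrow> bool) (r :: nat \<Rightarrow> dfs_state \<Rightarrow> nat).
          (\<forall>n. simple_graph_on n (G n)) \<longrightarrow>
          filterlim (\<lambda>n. min_degree (G n) n) at_top sequentially \<longrightarrow>
          (\<forall>n st. Tset st \<noteq> {} \<longrightarrow> r n st \<in> Tset st) \<longrightarrow>
          ((\<lambda>n. let m = min_degree (G n) n;
                    t = nat \<lceil>\<epsilon> * real k * real m\<rceil>
                in measure_pmf.prob (dfs_run (G n) n k t (r n) (t + 2 * n + 1))
                     {st. (1 - \<epsilon>) * real m \<le> real (hits st)})
           \<longlonglongrightarrow> 1))"
proof (intro exI[of _ "1/8"] conjI allI impI)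
  fix e :: real
  assume e: "0 < e \<and> e < 1/8"
  have large_k: "3 \<le> k \<and> 8 \<le> e * e * real k" if "nat \<lceil>8 / (e * e)\<rceil> + 3 \<le> k" for k :: nat
  proof -
    have "3 \<le> k" "8 / (e * e) \<le> real k"
      using that by linarith+
    then show ?thesis
      using e by (simp add: field_simps)
  qed
  show "\<exists>K::nat. \<forall>k\<ge>K. \<forall>G r. (\<forall>n. simple_graph_on n (G n)) \<longrightarrow>
          filterlim (\<lambda>n. min_degree (G n) n) at_top sequentially \<longrightarrow>
          (\<forall>n st. Tset st \<noteq> {} \<longrightarrow> r n st \<in> Tset st) \<longrightarrow>
          ((\<lambda>n. let m = min_degree (G n) n; t = nat \<lceil>e * real k * real m\<rceil>
                in measure_pmf.prob (dfs_run (G n) n k t (r n) (t + 2 * n + 1))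
                     {st. (1 - e) * real m \<le> real (hits st)}) \<longlonglongrightarrow> 1)"
    using large_k e less_imp_le[of e "1/8"]
    by (intro exI[of _ "nat \<lceil>8 / (e * e)\<rceil> + 3"] allI impI tendsto_dfs_many_hits_prob) blast+
qed (simp)

end
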